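(* Let $\Sigma=\{(x,u(x)):x\in\Omega\}$ be a smooth strictly locally convex graph in $\mathbb{H}^{n+1}$ over a bounded domain $\Omega\subset\mathbb{R}^n$, with $u\ge\epsilon$ in $\Omega$ and $u=\epsilon$ on $\partial\Omega$ for some $\epsilon>0$. Then \[ \frac{1}{\nu^{n+1}}\le\max\Big\{\frac{\max_\Omega u}{u},\ \max_{\partial\Omega}\frac{1}{\nu^{n+1}}\Big\}\quad\text{in }\Omega. \]
   Context: Half-space model $\mathbb{H}^{n+1}=\{(x,x_{n+1}):x_{n+1}>0\}$, metric $\sum dx_i^2/x_{n+1}^2$. The graph is oriented upward; strictly locally convex means all hyperbolic principal curvatures are positive, equivalently the matrix $\{\delta_{ij}+u_iu_j+uu_{ij}\}$ is positive definite. $\nu^{n+1}=1/\sqrt{1+|Du|^2}$ is the last component of the upward Euclidean unit normal. *)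

theory Defs
  imports "HOL-Analysis.Analysis"
begin

definition pdiff :: "'n::finite \<Rightarrow> (real^'n \<Rightarrow> real) \<Rightarrow> real^'n \<Rightarrow> real" where
  "pdiff i f x = frechet_derivative f (at x) (axis i 1)"

fun Ck_on :: "nat \<Rightarrow> (real^'n::finite) set \<Rightarrow> (real^'n \<Rightarrow> real) \<Rightarrow> bool" where
  "Ck_on 0 U f = continuous_on U f"
| "Ck_on (Suc k) U f = (continuous_on U f \<and> f differentiable_on U \<and> (\<forall>i. Ck_on k U (pdiff i f)))"

definition smooth_on :: "(real^'n::finite) set \<Rightarrow> (real^'n \<Rightarrow> real) \<Rightarrow> bool" where
  "smooth_on U f = (\<forall>k. Ck_on k U f)"

definition grad :: "(real^'n::finite \<Rightarrow> real) \<Rightarrow> real^'n \<Rightarrow> real^'n" where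
  "grad f x = (\<chi> i. pdiff i f x)"

definition hess :: "(real^'n::finite \<Rightarrow> real) \<Rightarrow> real^'n \<Rightarrow> real^'n^'n" where
  "hess f x = (\<chi> i j. pdiff j (pdiff i f) x)"

definition convex_matrix :: "(real^'n::finite \<Rightarrow> real) \<Rightarrow> real^'n \<Rightarrow> real^'n^'n" where
  "convex_matrix u x = (\<chi> i j. (if i = j then 1 else 0) + grad u x $ i * grad u x $ j + u x * hess u x $ i $ j)"

definition pos_def :: "real^'n^'n::finite \<Rightarrow> bool" where
  "pos_def A = (\<forall>\<xi>. \<xi> \<noteq> 0 \<longrightarrow> \<xi> \<bullet> (A *v \<xi>) > 0)"

text \<open>Strict local convexity of the graph of u over Omega (hyperbolic principal curvatures positive).\<close>
definition strictly_locally_convex_graph :: "(real^'n::finite \<Rightarrow> real) \<Rightarrow> (real^'n) set \<Rightarrow> bool" where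
  "strictly_locally_convex_graph u \<Omega> = (\<forall>x\<in>\<Omega>. pos_def (convex_matrix u x))"

text \<open>Last component of the upward Euclidean unit normal of the graph.\<close>
definition nu_last :: "(real^'n::finite \<Rightarrow> real) \<Rightarrow> real^'n \<Rightarrow> real" where
  "nu_last u x = 1 / sqrt (1 + (norm (grad u x))\<^sup>2)"

end

theory Submission
  imports Defs
begin

text \<open>The function \<open>w = (u / \<nu>\<^sup>n\<^sup>+\<^sup>1)\<^sup>2 = u\<^sup>2 (1 + |Du|\<^sup>2)\<close> (\<open>scaled_slope u\<close>) attains its
  maximum on the compact set \<open>closure \<Omega>\<close>. At an interior maximum point the first-order
  condition reads \<open>2u \<cdot> (Du)\<^sup>T A = 0\<close>, where \<open>A = (\<delta>\<^sub>i\<^sub>j + u\<^sub>iu\<^sub>j + uu\<^sub>i\<^sub>j)\<close> is positive definite by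
  strict local convexity, so \<open>Du = 0\<close> there and \<open>w \<le> (max u)\<^sup>2\<close>. At a boundary maximum point
  \<open>u = \<epsilon> \<le> u(x)\<close>, so \<open>w \<le> u(x)\<^sup>2 max\<^sub>\<partial>\<^sub>\<Omega> \<nu>\<^sup>-\<^sup>2\<close>. Taking square roots at \<open>x\<close> and dividing
  by \<open>u(x)\<close> gives the bound.\<close>

lemma pos_def_vector_matrix_mult_eq_0:
  fixes A :: "real^'n^'n::finite"
  assumes "pos_def A" and "v v* A = 0"
  shows "v = 0"
proof (rule ccontr)
  assume "v \<noteq> 0"
  with assms(1) have "v \<bullet> (A *v v) > 0" unfolding pos_def_def by blast
  moreover have "v \<bullet> (A *v v) = 0"
    using dot_lmul_matrix[of v A v] assms(2) by simp
  ultimately show False by simp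
qed

lemma norm_power2_vec: "(norm (x::real^'n::finite))\<^sup>2 = (\<Sum>i\<in>UNIV. (x$i)\<^sup>2)"
  by (simp only: power2_norm_eq_inner) (simp add: inner_vec_def power2_eq_square)

lemma nu_last_pos: "nu_last u x > 0"
  by (simp add: nu_last_def add_pos_nonneg)

lemma inverse_nu_last: "1 / nu_last u x = sqrt (1 + (norm (grad u x))\<^sup>2)"
  by (simp add: nu_last_def)

lemma nu_last_grad_eq_0: "grad u x = 0 \<Longrightarrow> nu_last u x = 1"
  by (simp add: nu_last_def)

lemma continuous_on_grad:
  assumes "\<And>i. continuous_on S (pdiff i u)"
  shows "continuous_on S (grad u)"
  unfolding grad_def[abs_def] by (intro continuous_on_vec_lambda assms)

lemma Ck_on_2_D:
  assumes "Ck_on 2 U u"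
  shows "continuous_on U u" and "u differentiable_on U"
    and "\<And>i. continuous_on U (pdiff i u)" and "\<And>i. pdiff i u differentiable_on U"
  using assms by (auto simp: numeral_2_eq_2)

definition scaled_slope :: "(real^'n::finite \<Rightarrow> real) \<Rightarrow> real^'n \<Rightarrow> real" where
  "scaled_slope u x = (u x)\<^sup>2 * (1 + (norm (grad u x))\<^sup>2)"

lemma scaled_slope_eq: "scaled_slope u x = (u x / nu_last u x)\<^sup>2"
proof -
  have "0 \<le> 1 + (norm (grad u x))\<^sup>2" by simp
  then show ?thesis by (simp add: scaled_slope_def nu_last_def power_mult_distrib)
qed

lemma continuous_on_scaled_slope:
  assumes "continuous_on S u" and "\<And>i. continuous_on S (pdiff i u)"
  shows "continuous_on S (scaled_slope u)"
  unfolding scaled_slope_def[abs_def]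
  by (intro continuous_intros assms continuous_on_grad)

lemma grad_vector_matrix_mult_convex_matrix:
  "(grad u x v* convex_matrix u x) $ k
     = grad u x $ k * (1 + (norm (grad u x))\<^sup>2) + u x * (\<Sum>i\<in>UNIV. grad u x $ i * hess u x $ i $ k)"
proof -
  let ?g = "grad u x" and ?H = "hess u x"
  have "(\<Sum>i\<in>UNIV. ?g $ i * (if i = k then 1 else 0)) = ?g $ k"
    by (subst mult.commute) (simp only: mult_if_delta sum.delta finite UNIV_I if_True)
  then have "(?g v* convex_matrix u x) $ k
      = ?g $ k + (\<Sum>i\<in>UNIV. ?g $ i * ?g $ i * ?g $ k) + (\<Sum>i\<in>UNIV. u x * ?g $ i * ?H $ i $ k)"
    by (simp add: vector_matrix_mult_def convex_matrix_def distrib_left sum.distrib mult_ac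
        del: mult_if_delta)
  then show ?thesis
    unfolding norm_power2_vec
    by (simp add: algebra_simps sum_distrib_left sum_distrib_right power2_eq_square)
qed

lemma has_derivative_scaled_slope:
  assumes "u differentiable (at x)" and "\<And>i. pdiff i u differentiable (at x)"
  obtains D where "(scaled_slope u has_derivative D) (at x)"
    and "\<And>k. D (axis k 1) = 2 * u x * (grad u x v* convex_matrix u x) $ k"
proof -
  define Du where "Du = frechet_derivative u (at x)"
  define Dg where "Dg i = frechet_derivative (pdiff i u) (at x)" for i
  have slope: "scaled_slope u = (\<lambda>y. (u y)\<^sup>2 * (1 + (\<Sum>i\<in>UNIV. (pdiff i u y)\<^sup>2)))"
    by (simp add: fun_eq_iff scaled_slope_def norm_power2_vec grad_def)
  have hu: "(u has_derivative Du) (at x)"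
    using assms(1) by (simp add: Du_def frechet_derivative_works)
  have hg: "(pdiff i u has_derivative Dg i) (at x)" for i
    using assms(2) by (simp add: Dg_def frechet_derivative_works)
  define D where "D v = 2 * u x * Du v * (1 + (norm (grad u x))\<^sup>2)
    + (u x)\<^sup>2 * (\<Sum>i\<in>UNIV. 2 * pdiff i u x * Dg i v)" for v
  have "(scaled_slope u has_derivative D) (at x)"
    unfolding slope D_def norm_power2_vec grad_def
    by (rule derivative_eq_intros hu hg refl | simp)+ (simp add: fun_eq_iff mult_ac)
  moreover have "D (axis k 1) = 2 * u x * (grad u x v* convex_matrix u x) $ k" for k
  proof -
    have "Du (axis k 1) = grad u x $ k" "Dg i (axis k 1) = hess u x $ i $ k" for i
      by (simp_all add: Du_def Dg_def grad_def hess_def pdiff_def)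
    then show ?thesis
      unfolding D_def grad_vector_matrix_mult_convex_matrix
      by (simp add: grad_def algebra_simps sum_distrib_left power2_eq_square)
  qed
  ultimately show ?thesis using that by blast
qed

lemma grad_eq_0_at_max_scaled_slope:
  assumes "open S" and "x \<in> S" and max: "\<forall>y\<in>S. scaled_slope u y \<le> scaled_slope u x"
    and "u differentiable (at x)" and "\<And>i. pdiff i u differentiable (at x)"
    and "pos_def (convex_matrix u x)" and "u x \<noteq> 0"
  shows "grad u x = 0"
proof -
  obtain D where D: "(scaled_slope u has_derivative D) (at x)"
    and Daxis: "\<And>k. D (axis k 1) = 2 * u x * (grad u x v* convex_matrix u x) $ k"
    using has_derivative_scaled_slope assms(4,5) by blast
  have "D = (\<lambda>v. 0)"
    using differential_zero_maxmin[OF assms(2,1) D] max by blast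
  then have "grad u x v* convex_matrix u x = 0"
    using Daxis \<open>u x \<noteq> 0\<close> by (simp add: vec_eq_iff)
  then show ?thesis
    using pos_def_vector_matrix_mult_eq_0 assms(6) by blast
qed

lemma bound_on_closure_by_interior_max_and_frontier:
  fixes f :: "'a::topological_space \<Rightarrow> real"
  assumes "open \<Omega>" and "compact (closure \<Omega>)" and "continuous_on (closure \<Omega>) f"
    and interior: "\<And>y. y \<in> \<Omega> \<Longrightarrow> \<forall>z\<in>closure \<Omega>. f z \<le> f y \<Longrightarrow> f y \<le> c"
    and frontier: "\<And>y. y \<in> frontier \<Omega> \<Longrightarrow> f y \<le> c"
    and "x \<in> closure \<Omega>"
  shows "f x \<le> c"
proof -
  have "closure \<Omega> \<noteq> {}" using assms(6) by auto
  then obtain y where y: "y \<in> closure \<Omega>" and ymax: "\<forall>z\<in>closure \<Omega>. f z \<le> f y"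
    using continuous_attains_sup[OF assms(2) _ assms(3)] by blast
  have "f y \<le> c"
  proof (cases "y \<in> \<Omega>")
    case True
    then show ?thesis using interior ymax by blast
  next
    case False
    then have "y \<in> frontier \<Omega>"
      using y \<open>open \<Omega>\<close> by (simp add: frontier_def interior_open)
    then show ?thesis using frontier by blast
  qed
  then show ?thesis using ymax assms(6) by fastforce
qed

lemma bdd_above_continuous_image_compact:
  fixes f :: "'a::topological_space \<Rightarrow> real"
  assumes "compact K" and "continuous_on K f" and "A \<subseteq> K"
  shows "bdd_above (f ` A)"
  using compact_imp_bounded[OF compact_continuous_image[OF assms(2,1)]] assms(3)
  by (meson bdd_above_mono bounded_imp_bdd_above image_mono)

lemma height_over_nu_last_le:
  fixes u :: "real^'n::finite \<Rightarrow> real"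
  assumes "open \<Omega>" and "bounded \<Omega>" and "open U" and "closure \<Omega> \<subseteq> U" and "Ck_on 2 U u"
    and "strictly_locally_convex_graph u \<Omega>" and "\<forall>y\<in>\<Omega>. u y > 0"
    and interior: "\<forall>y\<in>\<Omega>. u y \<le> M" and frontier: "\<forall>y\<in>frontier \<Omega>. u y / nu_last u y \<le> M"
    and "x \<in> closure \<Omega>"
  shows "u x / nu_last u x \<le> M"
proof (rule power2_le_imp_le)
  have cont_u: "continuous_on (closure \<Omega>) u"
    using continuous_on_subset[OF Ck_on_2_D(1)[OF assms(5)] assms(4)] .
  have cont_pdiff: "continuous_on (closure \<Omega>) (pdiff i u)" for i
    using continuous_on_subset[OF Ck_on_2_D(3)[OF assms(5)] assms(4)] .
  have diff: "u differentiable (at y)" "pdiff i u differentiable (at y)" if "y \<in> \<Omega>" for y i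
  proof -
    have "y \<in> U" using that assms(4) closure_subset by blast
    then show "u differentiable (at y)" "pdiff i u differentiable (at y)"
      using Ck_on_2_D(2,4)[OF assms(5)] assms(3)
      by (simp_all add: differentiable_on_eq_differentiable_at)
  qed
  have nonneg: "0 \<le> u y / nu_last u y" if "y \<in> closure \<Omega>" for y
    using continuous_ge_on_closure[OF cont_u that, of 0] assms(7) nu_last_pos[of u y]
    by (simp add: less_imp_le)
  show "(u x / nu_last u x)\<^sup>2 \<le> M\<^sup>2"
    unfolding scaled_slope_eq[symmetric]
  proof (rule bound_on_closure_by_interior_max_and_frontier
      [OF assms(1) _ continuous_on_scaled_slope[OF cont_u cont_pdiff] _ _ assms(10)])
    show "compact (closure \<Omega>)" using assms(2) by (simp add: compact_closure)
  next
    fix y assume "y \<in> \<Omega>" and max: "\<forall>z\<in>closure \<Omega>. scaled_slope u z \<le> scaled_slope u y"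
    then have "grad u y = 0"
      using grad_eq_0_at_max_scaled_slope[OF assms(1) \<open>y \<in> \<Omega>\<close> _ diff[OF \<open>y \<in> \<Omega>\<close>]]
        closure_subset assms(6,7)
      unfolding strictly_locally_convex_graph_def by fastforce
    then have "u y / nu_last u y \<le> M" "0 \<le> u y / nu_last u y"
      using assms(7) interior \<open>y \<in> \<Omega>\<close> by (auto simp: nu_last_grad_eq_0 less_imp_le)
    then show "scaled_slope u y \<le> M\<^sup>2"
      unfolding scaled_slope_eq by (rule power_mono)
  next
    fix y assume "y \<in> frontier \<Omega>"
    moreover have "0 \<le> u y / nu_last u y"
      using nonneg \<open>y \<in> frontier \<Omega>\<close> by (simp add: frontier_def)
    ultimately show "scaled_slope u y \<le> M\<^sup>2"
      using frontier by (simp add: scaled_slope_eq power_mono)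
  qed
  have "\<Omega> \<noteq> {}" using assms(10) by auto
  then obtain y where "y \<in> \<Omega>" by blast
  then have "0 < u y" "u y \<le> M" using assms(7) interior by auto
  then show "M \<ge> 0" by linarith
qed

theorem proposition3p2:
  fixes u :: "real^'n \<Rightarrow> real" and \<Omega> U :: "(real^'n) set" and \<epsilon> :: real
  assumes "open \<Omega>" and "connected \<Omega>" and "\<Omega> \<noteq> {}" and "bounded \<Omega>"
    and "open U" and "closure \<Omega> \<subseteq> U" and "smooth_on U u"
    and "strictly_locally_convex_graph u \<Omega>"
    and "\<epsilon> > 0"
    and "\<forall>x\<in>\<Omega>. u x \<ge> \<epsilon>" and "\<forall>x\<in>frontier \<Omega>. u x = \<epsilon>"
    and "x \<in> \<Omega>"
  shows "1 / nu_last u x \<le> max ((SUP y\<in>\<Omega>. u y) / u x) (SUP y\<in>frontier \<Omega>. 1 / nu_last u y)"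
proof -
  have C2: "Ck_on 2 U u" using assms(7) unfolding smooth_on_def by blast
  have compact: "compact (closure \<Omega>)" using assms(4) by (simp add: compact_closure)
  have "continuous_on (closure \<Omega>) u"
    using continuous_on_subset[OF Ck_on_2_D(1)[OF C2] assms(6)] .
  then have bdd_S: "bdd_above (u ` \<Omega>)"
    by (rule bdd_above_continuous_image_compact[OF compact _ closure_subset])
  have "continuous_on (closure \<Omega>) (\<lambda>y. 1 / nu_last u y)"
    unfolding inverse_nu_last using continuous_on_subset[OF Ck_on_2_D(3)[OF C2] assms(6)]
    by (intro continuous_intros continuous_on_grad)
  moreover have "frontier \<Omega> \<subseteq> closure \<Omega>" by (simp add: frontier_def)
  ultimately have bdd_B: "bdd_above ((\<lambda>y. 1 / nu_last u y) ` frontier \<Omega>)"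
    by (rule bdd_above_continuous_image_compact[OF compact])
  define S where "S = (SUP y\<in>\<Omega>. u y)"
  define B where "B = (SUP y\<in>frontier \<Omega>. 1 / nu_last u y)"
  have "u x > 0" using assms(9,10,12) by force
  have "u x / nu_last u x \<le> max S (u x * B)"
  proof (rule height_over_nu_last_le[OF assms(1,4,5,6) C2])
    show "\<forall>y\<in>\<Omega>. u y \<le> max S (u x * B)"
      using bdd_S unfolding S_def by (simp add: cSUP_upper le_max_iff_disj)
    show "\<forall>y\<in>frontier \<Omega>. u y / nu_last u y \<le> max S (u x * B)"
    proof
      fix y assume "y \<in> frontier \<Omega>"
      then have "u y / nu_last u y = \<epsilon> * (1 / nu_last u y)" using assms(11) by simp
      also have "\<dots> \<le> u x * B"
        using cSUP_upper[OF \<open>y \<in> frontier \<Omega>\<close> bdd_B] assms(9,10,12) nu_last_pos[of u y]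
        unfolding B_def by (intro mult_mono) auto
      finally show "u y / nu_last u y \<le> max S (u x * B)" by simp
    qed
  qed (use assms(8,9,10,12) closure_subset in \<open>force+\<close>)
  then have "1 / nu_last u x \<le> max S (u x * B) / u x"
    using \<open>u x > 0\<close> by (simp add: field_simps)
  also have "\<dots> = max (S / u x) B"
    using \<open>u x > 0\<close> by (simp add: max_divide_distrib_right)
  finally show ?thesis unfolding S_def B_def .
qed

end
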